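(* Let $\pi_2=2\int_0^1\frac{\mathrm{d}t}{\sqrt{1-t^4}}$ and let $\mathrm{sleaf}_2:\mathbb{R}\to\mathbb{R}$ be the leaf function of basis $2$. Let $m$ be an integer, let $l$ be real with $s:=\mathrm{sleaf}_2(l)\neq0$. (i) If $\frac{\pi_2}{2}(4m+1)\le l\le\frac{\pi_2}{2}(4m+3)$, then $$\Bigl(\mathrm{sleaf}_2\Bigl(\frac l2\Bigr)\Bigr)^2=\frac{-1-\sqrt{1-s^2}}{s^2}+\frac{\sqrt{1+s^2}}{s^2}\sqrt{2-s^2+2\sqrt{1-s^2}}.$$ (ii) If $\frac{\pi_2}{2}(4m-1)\le l\le\frac{\pi_2}{2}(4m+1)$, then $$\Bigl(\mathrm{sleaf}_2\Bigl(\frac l2\Bigr)\Bigr)^2=\frac{-1+\sqrt{1-s^2}}{s^2}+\frac{\sqrt{1+s^2}}{s^2}\sqrt{2-s^2-2\sqrt{1-s^2}}.$$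
   Context: For a natural number $n$, the leaf function $\mathrm{sleaf}_n:\mathbb{R}\to\mathbb{R}$ is the solution of $\frac{\mathrm{d}^2r}{\mathrm{d}l^2}=-n\,r^{2n-1}$ with $r(0)=0$, $r'(0)=1$; it is periodic with period $2\pi_n$, where $\pi_n=2\int_0^1\frac{\mathrm{d}t}{\sqrt{1-t^{2n}}}$, and on $[-\pi_n/2,\pi_n/2]$ it is the inverse of $r\mapsto\int_0^r\frac{\mathrm{d}t}{\sqrt{1-t^{2n}}}$. *)

theory Defs
  imports "HOL-Analysis.Analysis"
begin

text \<open>pi_n = 2 * int_0^1 dt / sqrt(1 - t^(2n)) (Henstock-Kurzweil integral; the
  integrand is nonnegative and improperly integrable).\<close>
definition pi_leaf :: "nat \<Rightarrow> real" where
  "pi_leaf n = 2 * integral {0..1} (\<lambda>t. 1 / sqrt (1 - t ^ (2 * n)))"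

definition sleaf :: "nat \<Rightarrow> real \<Rightarrow> real" where
  "sleaf n = (THE r. \<exists>r'. r 0 = 0 \<and> r' 0 = 1 \<and>
      (\<forall>x. (r has_real_derivative r' x) (at x)) \<and>
      (\<forall>x. (r' has_real_derivative (- real n * r x ^ (2 * n - 1))) (at x)))"

end

theory Submission
  imports Defs
begin

text \<open>For \<open>n = 2\<close> the leaf function is the lemniscate sine \<open>sl\<close>, normalised by
  \<open>sl'' = -2 sl\<^sup>3\<close>. Writing \<open>sl x = sin \<theta> / sqrt (1 + cos\<^sup>2 \<theta>)\<close> with
  \<open>d\<theta>/dx = sqrt (1 + cos\<^sup>2 \<theta>)\<close> gives an explicit global solution; since solutions of the
  ODE conserve \<open>sl'\<^sup>2 + sl\<^sup>4\<close> they are bounded, so a Gronwall argument makes it the unique one.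
  As \<open>\<theta>\<close> grows by \<open>\<pi>\<close> when \<open>x\<close> grows by \<open>\<pi>\<^sub>2\<close>, \<open>sl\<close> is \<open>\<pi>\<^sub>2\<close>-antiperiodic.
  Uniqueness also yields the duplication formula \<open>sl (2u) (1 + sl\<^sup>4 u) = 2 sl u sl' u\<close>; squaring
  it and using \<open>sl'\<^sup>2 = 1 - sl\<^sup>4\<close> shows that \<open>y = sl\<^sup>2 (l/2)\<close> solves
  \<open>s\<^sup>2 (1 + y\<^sup>2)\<^sup>2 = 4 y (1 - y\<^sup>2)\<close> with \<open>s = sl l\<close>. The two displayed expressions are the
  roots of this quartic in \<open>[0, 1]\<close>, and which one is \<open>y\<close> is decided by the sign of
  \<open>1 - 2 y - y\<^sup>2\<close>, i.e. by comparing \<open>l/2\<close> modulo \<open>\<pi>\<^sub>2\<close> with \<open>\<pi>\<^sub>2/4\<close>.\<close>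

lemma lemn_ode_energy:
  fixes r q :: "real \<Rightarrow> real"
  assumes dr: "\<And>x. (r has_real_derivative q x) (at x)"
    and dq: "\<And>x. (q has_real_derivative - 2 * r x ^ 3) (at x)"
  shows "(q x)\<^sup>2 + r x ^ 4 = (q 0)\<^sup>2 + r 0 ^ 4"
proof -
  have "((\<lambda>x. (q x)\<^sup>2 + r x ^ 4) has_real_derivative 0) (at x)" for x
    using DERIV_add[OF DERIV_power[OF dq, of 2] DERIV_power[OF dr, of 4]]
    by (simp add: algebra_simps numeral_eq_Suc)
  then show ?thesis by (intro DERIV_isconst_all) blast
qed

lemma abs_le_one_if_energy_one:
  fixes q r :: real
  assumes "q\<^sup>2 + r ^ 4 = 1"
  shows "\<bar>r\<bar> \<le> 1"
proof -
  have "r ^ 4 \<le> 1" using assms zero_le_power2[of q] by linarith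
  then have "\<bar>r\<bar> ^ 4 \<le> 1" by (simp add: power_even_abs_numeral)
  then show ?thesis by (metis abs_ge_zero power_le_one_iff zero_neq_numeral)
qed

lemma cube_diff_abs_le:
  fixes a b :: real
  assumes "\<bar>a\<bar> \<le> 1" "\<bar>b\<bar> \<le> 1"
  shows "\<bar>a ^ 3 - b ^ 3\<bar> \<le> 3 * \<bar>a - b\<bar>"
proof -
  have "\<bar>a\<^sup>2 + a * b + b\<^sup>2\<bar> \<le> \<bar>a\<^sup>2\<bar> + \<bar>a * b\<bar> + \<bar>b\<^sup>2\<bar>" by linarith
  also have "\<dots> \<le> 1 + 1 + 1"
    using assms by (intro add_mono) (auto simp: abs_mult abs_square_le_1 intro: mult_le_one)
  finally have "\<bar>a\<^sup>2 + a * b + b\<^sup>2\<bar> \<le> 3" by simp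
  moreover have "a ^ 3 - b ^ 3 = (a - b) * (a\<^sup>2 + a * b + b\<^sup>2)"
    by (simp add: power2_eq_square power3_eq_cube algebra_simps)
  ultimately show ?thesis
    using mult_left_mono[of "\<bar>a\<^sup>2 + a * b + b\<^sup>2\<bar>" 3 "\<bar>a - b\<bar>"] by (simp add: abs_mult)
qed

lemma gronwall_zero_right:
  fixes E E' :: "real \<Rightarrow> real"
  assumes dE: "\<And>t. (E has_real_derivative E' t) (at t)"
    and le: "\<And>t. E' t \<le> K * E t" and nonneg: "0 \<le> E x" and E0: "E 0 = 0" and x: "0 \<le> x"
  shows "E x = 0"
proof -
  have "E x * exp (- K * x) \<le> E 0 * exp (- K * 0)"
  proof (rule DERIV_nonpos_imp_nonincreasing[OF x])
    fix t
    have "((\<lambda>t. E t * exp (- K * t)) has_real_derivative (E' t - K * E t) * exp (- K * t)) (at t)"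
      by (auto intro!: derivative_eq_intros dE simp: algebra_simps)
    moreover have "(E' t - K * E t) * exp (- K * t) \<le> 0"
      using le[of t] by (simp add: mult_nonpos_nonneg)
    ultimately show "\<exists>y. ((\<lambda>t. E t * exp (- K * t)) has_real_derivative y) (at t) \<and> y \<le> 0"
      by blast
  qed
  then show ?thesis using nonneg E0 by (simp add: mult_le_0_iff)
qed

lemma gronwall_zero:
  fixes E E' :: "real \<Rightarrow> real"
  assumes dE: "\<And>t. (E has_real_derivative E' t) (at t)"
    and le: "\<And>t. \<bar>E' t\<bar> \<le> K * E t" and nonneg: "\<And>t. 0 \<le> E t" and E0: "E 0 = 0"
  shows "E x = 0"
proof (cases "0 \<le> x")
  case True
  show ?thesis
    by (rule gronwall_zero_right[OF dE _ nonneg E0 True]) (use le abs_le_D1 in blast)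
next
  case False
  have "E (- (- x)) = 0"
  proof (rule gronwall_zero_right[where E = "\<lambda>t. E (- t)" and E' = "\<lambda>t. - E' (- t)"
        and K = K and x = "- x"])
    show "((\<lambda>t. E (- t)) has_real_derivative - E' (- t)) (at t)" for t
      using DERIV_chain2[OF dE DERIV_minus[OF DERIV_ident]] by simp
    show "- E' (- t) \<le> K * E (- t)" for t using le[of "- t"] by linarith
  qed (use nonneg E0 False in auto)
  then show ?thesis by simp
qed

lemma lemn_ode_unique:
  fixes r1 q1 r2 q2 :: "real \<Rightarrow> real"
  assumes dr1: "\<And>x. (r1 has_real_derivative q1 x) (at x)"
    and dq1: "\<And>x. (q1 has_real_derivative - 2 * r1 x ^ 3) (at x)"
    and dr2: "\<And>x. (r2 has_real_derivative q2 x) (at x)"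
    and dq2: "\<And>x. (q2 has_real_derivative - 2 * r2 x ^ 3) (at x)"
    and bounded1: "\<And>x. \<bar>r1 x\<bar> \<le> 1" and bounded2: "\<And>x. \<bar>r2 x\<bar> \<le> 1"
    and "r1 0 = r2 0" "q1 0 = q2 0"
  shows "r1 x = r2 x"
proof -
  define E where "E x = (r1 x - r2 x)\<^sup>2 + (q1 x - q2 x)\<^sup>2" for x
  define E' where "E' x = 2 * (r1 x - r2 x) * (q1 x - q2 x)
    - 4 * (q1 x - q2 x) * (r1 x ^ 3 - r2 x ^ 3)" for x
  have "(E has_real_derivative E' x) (at x)" for x
    unfolding E_def E'_def
    by (auto intro!: derivative_eq_intros dr1 dr2 dq1 dq2 simp: algebra_simps)
  moreover have "\<bar>E' x\<bar> \<le> 7 * E x" for x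
  proof -
    let ?d = "\<bar>r1 x - r2 x\<bar>" and ?e = "\<bar>q1 x - q2 x\<bar>"
    have "\<bar>E' x\<bar> \<le> 2 * ?d * ?e + 4 * ?e * \<bar>r1 x ^ 3 - r2 x ^ 3\<bar>"
      unfolding E'_def
      by (rule order_trans[OF abs_triangle_ineq4]) (simp only: abs_mult abs_numeral order_refl)
    also have "\<dots> \<le> 2 * ?d * ?e + 4 * ?e * (3 * ?d)"
      using cube_diff_abs_le[OF bounded1 bounded2] by (intro add_left_mono mult_left_mono) auto
    also have "\<dots> \<le> 7 * (?d\<^sup>2 + ?e\<^sup>2)"
      using sum_squares_bound[of ?d ?e] by (simp add: algebra_simps)
    finally show ?thesis by (simp add: E_def)
  qed
  ultimately have "E x = 0"
    by (rule gronwall_zero) (use assms in \<open>simp_all add: E_def\<close>)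
  then show ?thesis by (simp add: E_def add_nonneg_eq_0_iff)
qed

definition lemn_weight :: "real \<Rightarrow> real" where
  "lemn_weight t = 1 / sqrt (1 + (cos t)\<^sup>2)"

text \<open>The signed integral from \<open>0\<close> to \<open>x\<close>: at least one of the two terms vanishes.\<close>
definition lemn_Phi :: "real \<Rightarrow> real" where
  "lemn_Phi x = integral {0..x} lemn_weight - integral {x..0} lemn_weight"

lemma one_plus_cos_sq_pos: "0 < 1 + (cos (t::real))\<^sup>2"
  using zero_le_power2[of "cos t"] by linarith

lemma lemn_weight_pos: "0 < lemn_weight t"
  by (simp add: lemn_weight_def one_plus_cos_sq_pos)

lemma continuous_on_lemn_weight: "continuous_on S lemn_weight"
  unfolding lemn_weight_def
  by (auto intro!: continuous_intros simp: one_plus_cos_sq_pos[THEN less_imp_neq, symmetric])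

lemma lemn_Phi_eq_integral_from:
  assumes "a \<le> 0" "a \<le> x"
  shows "lemn_Phi x = integral {a..x} lemn_weight - integral {a..0} lemn_weight"
proof -
  have int: "lemn_weight integrable_on {c..d}" for c d
    by (rule integrable_continuous_real[OF continuous_on_lemn_weight])
  show ?thesis
  proof (cases "0 \<le> x")
    case True
    then have "integral {x..0} lemn_weight = 0" by (cases "x = 0") auto
    then show ?thesis
      using True Henstock_Kurzweil_Integration.integral_combine[OF assms(1) True int]
      by (simp add: lemn_Phi_def)
  next
    case False
    then have "{0..x} = {}" by simp
    then show ?thesis
      using False Henstock_Kurzweil_Integration.integral_combine[OF assms(2) _ int, of 0]
      by (simp add: lemn_Phi_def)
  qed
qed

lemma lemn_Phi_deriv: "(lemn_Phi has_real_derivative lemn_weight t) (at t)"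
proof -
  define a where "a = min t 0 - 1"
  have "((\<lambda>x. integral {a..x} lemn_weight) has_real_derivative lemn_weight t)
      (at t within {a..t + 1})"
    by (rule integral_has_real_derivative[OF continuous_on_lemn_weight]) (simp_all add: a_def)
  moreover have "at t within {a..t + 1} = at t"
    by (rule at_within_interior) (simp add: a_def)
  ultimately have "((\<lambda>x. integral {a..x} lemn_weight - integral {a..0} lemn_weight)
      has_real_derivative lemn_weight t - 0) (at t)"
    by (intro DERIV_diff DERIV_const) simp
  then have "((\<lambda>x. integral {a..x} lemn_weight - integral {a..0} lemn_weight)
      has_real_derivative lemn_weight t) (at t)"
    by simp
  then show ?thesis
    by (rule has_field_derivative_transform_within_open[where S = "{a<..}"])
       (auto simp: a_def intro!: lemn_Phi_eq_integral_from[symmetric])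
qed

lemma lemn_Phi_0 [simp]: "lemn_Phi 0 = 0"
  by (simp add: lemn_Phi_def)

lemma strict_mono_lemn_Phi: "strict_mono lemn_Phi"
proof (rule strict_monoI)
  fix x y :: real
  assume "x < y"
  then show "lemn_Phi x < lemn_Phi y"
    by (rule DERIV_pos_imp_increasing) (use lemn_Phi_deriv lemn_weight_pos in blast)
qed

lemma lemn_Phi_affine:
  assumes "\<And>t. lemn_weight (a * t + c) = lemn_weight t"
  shows "lemn_Phi (a * x + c) = a * lemn_Phi x + lemn_Phi c"
proof -
  have "((\<lambda>x. lemn_Phi (a * x + c) - a * lemn_Phi x) has_real_derivative
      lemn_weight (a * x + c) * a - a * lemn_weight x) (at x)" for x
    by (auto intro!: derivative_eq_intros DERIV_chain2[OF lemn_Phi_deriv] lemn_Phi_deriv)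
  then have "((\<lambda>x. lemn_Phi (a * x + c) - a * lemn_Phi x) has_real_derivative 0) (at x)" for x
    by (simp add: assms)
  then have "lemn_Phi (a * x + c) - a * lemn_Phi x = lemn_Phi (a * 0 + c) - a * lemn_Phi 0"
    by (intro DERIV_isconst_all) blast
  then show ?thesis by simp
qed

definition varpi :: real where
  "varpi = lemn_Phi pi"

lemma lemn_Phi_add_pi: "lemn_Phi (x + pi) = lemn_Phi x + varpi"
  using lemn_Phi_affine[of 1 pi x] by (simp add: lemn_weight_def varpi_def)

lemma lemn_Phi_pi_minus: "lemn_Phi (pi - x) = varpi - lemn_Phi x"
  using lemn_Phi_affine[of "- 1" pi x] by (simp add: lemn_weight_def varpi_def)

lemma lemn_Phi_minus: "lemn_Phi (- x) = - lemn_Phi x"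
  using lemn_Phi_affine[of "- 1" 0 x] by (simp add: lemn_weight_def)

lemma varpi_pos: "0 < varpi"
  using strict_mono_lemn_Phi[THEN strict_monoD, of 0 pi] by (simp add: varpi_def)

lemma lemn_Phi_add_int_pi: "lemn_Phi (x + of_int k * pi) = lemn_Phi x + of_int k * varpi"
proof (induction k rule: int_induct[where k = 0])
  case (step1 i)
  then show ?case using lemn_Phi_add_pi[of "x + of_int i * pi"] by (simp add: algebra_simps)
next
  case (step2 i)
  then show ?case using lemn_Phi_add_pi[of "x + of_int (i - 1) * pi"] by (simp add: algebra_simps)
qed simp

lemma bij_lemn_Phi: "bij lemn_Phi"
proof (rule bijI)
  show "inj lemn_Phi" by (rule strict_mono_imp_inj_on[OF strict_mono_lemn_Phi])
  show "surj lemn_Phi"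
    unfolding surj_def
  proof
    fix y
    define k where "k = \<lfloor>y / varpi\<rfloor>"
    have "lemn_Phi (of_int k * pi) \<le> y" "y \<le> lemn_Phi (of_int (k + 1) * pi)"
      using lemn_Phi_add_int_pi[of 0 k] lemn_Phi_add_int_pi[of 0 "k + 1"] varpi_pos
        floor_divide_lower[of varpi y] floor_divide_upper[of varpi y]
      by (auto simp: k_def algebra_simps)
    then show "\<exists>x. y = lemn_Phi x"
      using IVT[of lemn_Phi "of_int k * pi" y "of_int (k + 1) * pi"]
        DERIV_isCont[OF lemn_Phi_deriv] by (force simp: algebra_simps)
  qed
qed

definition lemn_Theta :: "real \<Rightarrow> real" where
  "lemn_Theta = inv lemn_Phi"

lemma lemn_Phi_Theta [simp]: "lemn_Phi (lemn_Theta y) = y"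
  unfolding lemn_Theta_def by (rule surj_f_inv_f[OF bij_is_surj[OF bij_lemn_Phi]])

lemma lemn_Theta_Phi [simp]: "lemn_Theta (lemn_Phi x) = x"
  unfolding lemn_Theta_def by (rule inv_f_f[OF bij_is_inj[OF bij_lemn_Phi]])

lemma lemn_Theta_deriv: "(lemn_Theta has_real_derivative sqrt (1 + (cos (lemn_Theta y))\<^sup>2)) (at y)"
proof -
  have "isCont lemn_Theta (lemn_Phi (lemn_Theta y))"
    by (rule isCont_inverse_function[where d = 1]) (auto intro: DERIV_isCont[OF lemn_Phi_deriv])
  then have "(lemn_Theta has_real_derivative inverse (lemn_weight (lemn_Theta y))) (at y)"
    by (intro DERIV_inverse_function[where a = "y - 1" and b = "y + 1" and f = lemn_Phi]
        lemn_Phi_deriv) (auto simp: lemn_weight_pos[THEN less_imp_neq, symmetric])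
  then show ?thesis by (simp add: lemn_weight_def)
qed

lemma lemn_Theta_add_int_varpi: "lemn_Theta (y + of_int k * varpi) = lemn_Theta y + of_int k * pi"
  by (metis lemn_Phi_Theta lemn_Phi_add_int_pi lemn_Theta_Phi)

lemma lemn_Theta_minus: "lemn_Theta (- y) = - lemn_Theta y"
  by (metis lemn_Phi_Theta lemn_Phi_minus lemn_Theta_Phi)

lemma lemn_Theta_0 [simp]: "lemn_Theta 0 = 0"
  using lemn_Theta_Phi[of 0] by simp

lemma lemn_Theta_half_varpi: "lemn_Theta (varpi / 2) = pi / 2"
proof -
  have "lemn_Phi (pi / 2) = varpi / 2" using lemn_Phi_pi_minus[of "pi / 2"] by simp
  then show ?thesis by (metis lemn_Theta_Phi)
qed

lemma strict_mono_lemn_Theta: "strict_mono lemn_Theta"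
  by (metis lemn_Phi_Theta strict_mono_lemn_Phi strict_monoI strict_mono_less)

text \<open>In the variable \<open>\<theta> = lemn_Theta x\<close>, for which \<open>d\<theta>/dx = sqrt (1 + cos\<^sup>2 \<theta>)\<close>, the
  lemniscate sine becomes \<open>sin \<theta> / sqrt (1 + cos\<^sup>2 \<theta>)\<close> and its derivative
  \<open>2 cos \<theta> / (1 + cos\<^sup>2 \<theta>)\<close>.\<close>
definition sl :: "real \<Rightarrow> real" where
  "sl x = sin (lemn_Theta x) / sqrt (1 + (cos (lemn_Theta x))\<^sup>2)"

definition sl' :: "real \<Rightarrow> real" where
  "sl' x = 2 * cos (lemn_Theta x) / (1 + (cos (lemn_Theta x))\<^sup>2)"

lemma sl_deriv: "(sl has_real_derivative sl' x) (at x)"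
proof -
  define c where "c = cos (lemn_Theta x)"
  define s where "s = sin (lemn_Theta x)"
  define q where "q = sqrt (1 + c\<^sup>2)"
  have q: "0 < q" "q\<^sup>2 = 1 + c\<^sup>2" "s\<^sup>2 = 1 - c\<^sup>2"
    by (simp_all add: q_def c_def s_def one_plus_cos_sq_pos sin_squared_eq add_pos_nonneg)
  have "(sl has_real_derivative
      (c * q * q - s * (inverse q / 2 * (- 2 * c * s * q))) / q\<^sup>2) (at x)"
    unfolding sl_def[abs_def] using one_plus_cos_sq_pos[of "lemn_Theta x"]
    by (auto intro!: derivative_eq_intros lemn_Theta_deriv
        simp: c_def s_def q_def)
  moreover have "(c * q * q - s * (inverse q / 2 * (- 2 * c * s * q))) / q\<^sup>2 = sl' x"
    using q by (simp add: sl'_def c_def[symmetric] field_simps power2_eq_square) algebra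
  ultimately show ?thesis by simp
qed

lemma sl'_deriv: "(sl' has_real_derivative - 2 * sl x ^ 3) (at x)"
proof -
  define c where "c = cos (lemn_Theta x)"
  define s where "s = sin (lemn_Theta x)"
  define q where "q = sqrt (1 + c\<^sup>2)"
  have q: "0 < q" "q\<^sup>2 = 1 + c\<^sup>2" "s\<^sup>2 = 1 - c\<^sup>2"
    by (simp_all add: q_def c_def s_def one_plus_cos_sq_pos sin_squared_eq add_pos_nonneg)
  have deriv: "(sl' has_real_derivative
      (4 * c * c * s * q - 2 * s * q * (1 + c\<^sup>2)) / ((1 + c\<^sup>2) * (1 + c\<^sup>2))) (at x)"
    unfolding sl'_def[abs_def] using one_plus_cos_sq_pos[of "lemn_Theta x"]
    by (auto intro!: derivative_eq_intros lemn_Theta_deriv simp: c_def s_def q_def algebra_simps)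
  have num: "4 * c * c * s * q - 2 * s * q * (1 + c\<^sup>2) = - 2 * s ^ 3 * q"
    using q(3) by algebra
  have "(4 * c * c * s * q - 2 * s * q * (1 + c\<^sup>2)) / ((1 + c\<^sup>2) * (1 + c\<^sup>2))
      = - 2 * s ^ 3 * q / (q\<^sup>2 * q\<^sup>2)"
    by (simp add: num q(2))
  also have "\<dots> = - 2 * (s / q) ^ 3"
    using q(1) by (simp add: field_simps power2_eq_square power3_eq_cube)
  also have "\<dots> = - 2 * sl x ^ 3"
    by (simp add: sl_def c_def s_def q_def)
  finally show ?thesis using deriv by simp
qed

lemma sl_energy: "(sl' x)\<^sup>2 + sl x ^ 4 = 1"
proof -
  define c where "c = cos (lemn_Theta x)"
  define s where "s = sin (lemn_Theta x)"
  define q where "q = sqrt (1 + c\<^sup>2)"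
  have pos: "0 < 1 + c\<^sup>2" and s: "s\<^sup>2 = 1 - c\<^sup>2" and q: "q\<^sup>2 = 1 + c\<^sup>2"
    by (simp_all add: c_def s_def q_def one_plus_cos_sq_pos sin_squared_eq add_pos_nonneg)
  have "sl x = s / q" "sl' x = 2 * c / (1 + c\<^sup>2)"
    by (simp_all add: sl_def sl'_def c_def s_def q_def)
  then have "(sl' x)\<^sup>2 + sl x ^ 4 = (2 * c)\<^sup>2 / (1 + c\<^sup>2)\<^sup>2 + (s\<^sup>2)\<^sup>2 / (q\<^sup>2)\<^sup>2"
    by (simp add: power_divide flip: power_mult)
  also have "\<dots> = (4 * c\<^sup>2 + (1 - c\<^sup>2)\<^sup>2) / (1 + c\<^sup>2)\<^sup>2"
    by (simp add: q s add_divide_distrib power_mult_distrib)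
  also have "4 * c\<^sup>2 + (1 - c\<^sup>2)\<^sup>2 = (1 + c\<^sup>2)\<^sup>2"
    by algebra
  finally show ?thesis using pos by simp
qed

lemma sl_0 [simp]: "sl 0 = 0" and sl'_0 [simp]: "sl' 0 = 1"
  by (simp_all add: sl_def sl'_def)

lemma abs_sl_le_1: "\<bar>sl x\<bar> \<le> 1"
  by (rule abs_le_one_if_energy_one[OF sl_energy])

lemma sl_eq_if_lemn_ode:
  fixes r q :: "real \<Rightarrow> real"
  assumes "r 0 = 0" "q 0 = 1"
    and dr: "\<And>x. (r has_real_derivative q x) (at x)"
    and dq: "\<And>x. (q has_real_derivative - 2 * r x ^ 3) (at x)"
  shows "r x = sl x"
proof (rule lemn_ode_unique[OF dr dq sl_deriv sl'_deriv])
  show "\<bar>r x\<bar> \<le> 1" for x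
    using lemn_ode_energy[OF dr dq, of x] assms(1,2) by (intro abs_le_one_if_energy_one) simp
qed (simp_all add: abs_sl_le_1 assms(1,2))

lemma sleaf_2_eq_sl: "sleaf 2 = sl"
  unfolding sleaf_def
proof (rule the_equality)
  show "\<exists>r'. sl 0 = 0 \<and> r' 0 = 1 \<and> (\<forall>x. (sl has_real_derivative r' x) (at x)) \<and>
      (\<forall>x. (r' has_real_derivative - real 2 * sl x ^ (2 * 2 - 1)) (at x))"
    using sl_deriv sl'_deriv by (intro exI[of _ sl']) simp
next
  fix r
  assume "\<exists>r'. r 0 = 0 \<and> r' 0 = 1 \<and> (\<forall>x. (r has_real_derivative r' x) (at x)) \<and>
      (\<forall>x. (r' has_real_derivative - real 2 * r x ^ (2 * 2 - 1)) (at x))"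
  then obtain q where "r 0 = 0" "q 0 = 1" "\<And>x. (r has_real_derivative q x) (at x)"
      "\<And>x. (q has_real_derivative - 2 * r x ^ 3) (at x)"
    by auto
  then show "r = sl" using sl_eq_if_lemn_ode by blast
qed

lemma one_plus_pow4_pos: "0 < 1 + (x::real) ^ 4"
proof -
  have "0 \<le> x ^ 4" by (rule zero_le_even_power) simp
  then show ?thesis by linarith
qed

lemma lemn_ode_doubling:
  fixes r p :: "real \<Rightarrow> real"
  assumes dr: "\<And>x. (r has_real_derivative p x / 2) (at x)"
    and dp: "\<And>x. (p has_real_derivative - (r x ^ 3)) (at x)"
    and energy: "\<And>x. (p x)\<^sup>2 + r x ^ 4 = 1"
  defines "h \<equiv> \<lambda>x. 2 * r x * p x / (1 + r x ^ 4)"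
    and "h' \<equiv> \<lambda>x. (1 - 6 * r x ^ 4 + r x ^ 8) / (1 + r x ^ 4)\<^sup>2"
  shows "(h has_real_derivative h' x) (at x)" and "(h' has_real_derivative - 2 * h x ^ 3) (at x)"
proof -
  have nz: "1 + r x ^ 4 \<noteq> 0" using one_plus_pow4_pos[of "r x"] by simp
  have p2: "(p x)\<^sup>2 = 1 - r x ^ 4" using energy[of x] by simp
  show "(h has_real_derivative h' x) (at x)"
    unfolding h_def h'_def
    apply (rule derivative_eq_intros dr dp refl)+
     apply (rule nz)
    apply (simp add: divide_simps nz)
    using p2 by algebra
  show "(h' has_real_derivative - 2 * h x ^ 3) (at x)"
    unfolding h_def h'_def
    apply (rule derivative_eq_intros dr dp refl)+
     apply (simp add: nz)
    apply (simp add: divide_simps nz)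
    using p2 by algebra
qed

lemma sl_double: "sl (2 * u) * (1 + sl u ^ 4) = 2 * sl u * sl' u"
proof -
  have half: "((\<lambda>x. x / 2) has_real_derivative 1 / 2) (at x)" for x :: real
    by (auto intro!: derivative_eq_intros)
  have dr: "((\<lambda>x. sl (x / 2)) has_real_derivative sl' (x / 2) / 2) (at x)" for x
    using DERIV_chain2[OF sl_deriv half] by simp
  have dp: "((\<lambda>x. sl' (x / 2)) has_real_derivative - (sl (x / 2) ^ 3)) (at x)" for x
    using DERIV_chain2[OF sl'_deriv half] by simp
  note doubling = lemn_ode_doubling[OF dr dp sl_energy]
  have "2 * sl (x / 2) * sl' (x / 2) / (1 + sl (x / 2) ^ 4) = sl x" for x
    by (rule sl_eq_if_lemn_ode[OF _ _ doubling]) simp_all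
  from this[of "2 * u"] show ?thesis
    using one_plus_pow4_pos[of "sl u"] by (simp add: field_simps)
qed

lemma sl_add_varpi: "sl (x + varpi) = - sl x"
  using lemn_Theta_add_int_varpi[of x 1] by (simp add: sl_def)

lemma sl_minus: "sl (- x) = - sl x"
  by (simp add: sl_def lemn_Theta_minus)

lemma sl_varpi_minus: "sl (varpi - x) = sl x"
  using sl_add_varpi[of "- x"] by (simp add: sl_minus)

lemma sl_sq_add_int_varpi: "(sl (x + of_int k * varpi))\<^sup>2 = (sl x)\<^sup>2"
proof (induction k rule: int_induct[where k = 0])
  case (step1 i)
  then show ?case using sl_add_varpi[of "x + of_int i * varpi"] by (simp add: algebra_simps)
next
  case (step2 i)
  then show ?case using sl_add_varpi[of "x + of_int (i - 1) * varpi"] by (simp add: algebra_simps)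
qed simp

lemma sl_half_varpi: "sl (varpi / 2) = 1"
  by (simp add: sl_def lemn_Theta_half_varpi)

lemma sl'_pos:
  assumes "0 < x" "x < varpi / 2"
  shows "0 < sl' x"
proof -
  have "0 < lemn_Theta x" "lemn_Theta x < pi / 2"
    using assms strict_mono_lemn_Theta[THEN strict_monoD, of 0 x]
      strict_mono_lemn_Theta[THEN strict_monoD, of x "varpi / 2"]
    by (simp_all add: lemn_Theta_half_varpi)
  then show ?thesis by (simp add: sl'_def cos_gt_zero one_plus_cos_sq_pos)
qed

lemma sl'_nonneg:
  assumes "0 \<le> x" "x \<le> varpi / 2"
  shows "0 \<le> sl' x"
proof -
  have "0 \<le> lemn_Theta x" "lemn_Theta x \<le> pi / 2"
    using assms strict_mono_less_eq[OF strict_mono_lemn_Theta, of 0 x]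
      strict_mono_less_eq[OF strict_mono_lemn_Theta, of x "varpi / 2"]
    by (simp_all add: lemn_Theta_half_varpi)
  then show ?thesis by (simp add: sl'_def cos_ge_zero one_plus_cos_sq_pos)
qed

lemma sl_mono:
  assumes "0 \<le> a" "a \<le> b" "b \<le> varpi / 2"
  shows "sl a \<le> sl b"
proof (rule DERIV_nonneg_imp_nondecreasing[OF assms(2)])
  fix x
  assume "a \<le> x" "x \<le> b"
  then show "\<exists>y. (sl has_real_derivative y) (at x) \<and> 0 \<le> y"
    using assms sl_deriv sl'_nonneg[of x] by auto
qed

lemma sl_nonneg: "0 \<le> x \<Longrightarrow> x \<le> varpi / 2 \<Longrightarrow> 0 \<le> sl x"
  using sl_mono[of 0 x] by simp

lemma strict_mono_on_if_deriv_pos: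
  fixes f f' :: "real \<Rightarrow> real"
  assumes cont: "continuous_on {a..b} f"
    and deriv: "\<And>x. a < x \<Longrightarrow> x < b \<Longrightarrow> (f has_real_derivative f' x) (at x)"
    and pos: "\<And>x. a < x \<Longrightarrow> x < b \<Longrightarrow> 0 < f' x"
  shows "strict_mono_on {a..b} f"
proof (rule strict_mono_onI)
  fix x y
  assume xy: "x \<in> {a..b}" "y \<in> {a..b}" "x < y"
  show "f x < f y"
  proof (rule DERIV_pos_imp_increasing_open[OF \<open>x < y\<close>])
    fix z
    assume "x < z" "z < y"
    then have "a < z" "z < b" using xy by auto
    then show "\<exists>d. (f has_real_derivative d) (at z) \<and> 0 < d" using deriv pos by blast
  next
    show "continuous_on {x..y} f" using xy by (auto intro: continuous_on_subset[OF cont])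
  qed
qed

lemma has_integral_inverse_deriv:
  fixes f f' h :: "real \<Rightarrow> real"
  assumes "a < b" and cont: "continuous_on {a..b} f"
    and deriv: "\<And>x. a < x \<Longrightarrow> x < b \<Longrightarrow> (f has_real_derivative f' x) (at x)"
    and pos: "\<And>x. a < x \<Longrightarrow> x < b \<Longrightarrow> 0 < f' x"
    and h: "\<And>x. a < x \<Longrightarrow> x < b \<Longrightarrow> h (f x) = 1 / f' x"
  shows "(h has_integral (b - a)) {f a..f b}"
proof -
  have strict: "strict_mono_on {a..b} f"
    by (rule strict_mono_on_if_deriv_pos[OF cont deriv pos])
  then have inj: "inj_on f {a..b}" by (rule strict_mono_on_imp_inj_on)
  have img: "f ` {a..b} = {f a..f b}"
  proof
    show "f ` {a..b} \<subseteq> {f a..f b}"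
      using strict_mono_onD[OF strict] \<open>a < b\<close> by (fastforce simp: le_less)
    show "{f a..f b} \<subseteq> f ` {a..b}"
      using IVT'[of f a _ b] cont \<open>a < b\<close> by fastforce
  qed
  define G where "G = inv_into {a..b} f"
  have G_f: "G (f x) = x" if "x \<in> {a..b}" for x
    using inv_into_f_f[OF inj that] by (simp add: G_def)
  have f_G: "f (G t) = t" if "t \<in> {f a..f b}" for t
    using that img f_inv_into_f[of t f "{a..b}"] by (simp add: G_def)
  have G_in: "G t \<in> {a..b}" if "t \<in> {f a..f b}" for t
    using that img inv_into_into[of t f "{a..b}"] by (simp add: G_def)
  have G_cont: "continuous_on {f a..f b} G"
    using continuous_on_inv[OF cont compact_Icc] G_f img by simp
  have "(G has_real_derivative h t) (at t)" if t: "f a < t" "t < f b" for t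
  proof -
    have "a < G t" "G t < b"
      using G_in[of t] f_G[of t] t by (auto simp: le_less)
    then have "(G has_real_derivative inverse (f' (G t))) (at t)"
      using t pos[of "G t"] f_G G_cont
      by (intro DERIV_inverse_function[where a = "f a" and b = "f b" and f = f] deriv)
         (auto simp: continuous_on_interior)
    moreover have "h t = inverse (f' (G t))"
      using h[OF \<open>a < G t\<close> \<open>G t < b\<close>] f_G[of t] t by (simp add: divide_inverse)
    ultimately show ?thesis by simp
  qed
  then have "(h has_integral G (f b) - G (f a)) {f a..f b}"
    using strict_mono_onD[OF strict, of a b] \<open>a < b\<close>
    by (intro fundamental_theorem_of_calculus_interior G_cont)
       (auto simp: has_real_derivative_iff_has_vector_derivative)
  then show ?thesis using \<open>a < b\<close> by (simp add: G_f)
qed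

lemma pi_leaf_2_eq_varpi: "pi_leaf 2 = varpi"
proof -
  have "((\<lambda>t. 1 / sqrt (1 - t ^ 4)) has_integral (varpi / 2 - 0)) {sl 0..sl (varpi / 2)}"
  proof (rule has_integral_inverse_deriv)
    show "continuous_on {0..varpi / 2} sl"
      by (meson DERIV_isCont continuous_at_imp_continuous_on sl_deriv)
    fix x
    assume x: "0 < x" "x < varpi / 2"
    then show "0 < sl' x" by (rule sl'_pos)
    then show "1 / sqrt (1 - sl x ^ 4) = 1 / sl' x"
      using sl_energy[of x] by (metis add_diff_cancel_right' real_sqrt_unique less_imp_le)
  qed (use sl_deriv varpi_pos in auto)
  then show ?thesis
    by (simp add: pi_leaf_def sl_half_varpi integral_unique)
qed

lemma sl_double_sq:
  "(sl (2 * u))\<^sup>2 * (1 + ((sl u)\<^sup>2)\<^sup>2)\<^sup>2 = 4 * (sl u)\<^sup>2 * (1 - ((sl u)\<^sup>2)\<^sup>2)"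
proof -
  have "(sl (2 * u) * (1 + sl u ^ 4))\<^sup>2 = (2 * sl u * sl' u)\<^sup>2" by (simp only: sl_double)
  moreover have "(sl' u)\<^sup>2 = 1 - sl u ^ 4" using sl_energy[of u] by simp
  ultimately show ?thesis by (simp add: power_mult_distrib flip: power_mult)
qed

text \<open>Solving \<open>s\<^sup>2 (1 + y\<^sup>2)\<^sup>2 = 4 y (1 - y\<^sup>2)\<close> for \<open>y\<close>: with \<open>D = 1 + y\<^sup>2\<close> and
  \<open>g = 1 - 2 y - y\<^sup>2\<close> one has \<open>1 - s\<^sup>2 = (g / D)\<^sup>2\<close> and \<open>1 + s\<^sup>2 = ((1 + 2 y - y\<^sup>2) / D)\<^sup>2\<close>,
  so the sign \<open>\<sigma>\<close> of \<open>g\<close> selects the root.\<close>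
lemma quartic_root:
  fixes s y \<sigma> :: real
  assumes "s \<noteq> 0" "0 \<le> y" "y \<le> 1" and eq: "s\<^sup>2 * (1 + y\<^sup>2)\<^sup>2 = 4 * y * (1 - y\<^sup>2)"
    and \<sigma>: "\<sigma> = 1 \<or> \<sigma> = - 1" and sign: "0 \<le> \<sigma> * (1 - 2 * y - y\<^sup>2)"
  shows "y = (- 1 + \<sigma> * sqrt (1 - s\<^sup>2)) / s\<^sup>2
    + sqrt (1 + s\<^sup>2) / s\<^sup>2 * sqrt (2 - s\<^sup>2 - 2 * \<sigma> * sqrt (1 - s\<^sup>2))"
proof -
  define D where "D = 1 + y\<^sup>2"
  define g where "g = 1 - 2 * y - y\<^sup>2"
  define b where "b = (1 + 2 * y - y\<^sup>2) / D"
  define a where "a = \<sigma> * sqrt (1 - s\<^sup>2)"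
  have D: "0 < D" by (simp add: D_def add_pos_nonneg)
  have s2: "s\<^sup>2 = 4 * y * (1 - y\<^sup>2) / D\<^sup>2"
    using eq D by (simp add: D_def field_simps)
  have one_minus: "1 - s\<^sup>2 = (g / D)\<^sup>2"
    using D by (simp add: s2 D_def g_def field_simps) algebra
  then have "sqrt (1 - s\<^sup>2) = \<bar>g\<bar> / D"
    using D by (simp add: real_sqrt_abs abs_div)
  moreover have "\<sigma> * \<bar>g\<bar> = g"
    using \<sigma> sign by (auto simp: g_def abs_if)
  ultimately have a: "a = g / D" by (simp add: a_def)
  have "1 + s\<^sup>2 = b\<^sup>2"
    using D by (simp add: s2 D_def b_def field_simps) algebra
  moreover have "y\<^sup>2 \<le> y"
    using \<open>0 \<le> y\<close> \<open>y \<le> 1\<close> by (simp add: power2_eq_square mult_left_le)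
  then have "0 \<le> b"
    using \<open>0 \<le> y\<close> D unfolding b_def by (intro divide_nonneg_pos) auto
  ultimately have sqrt_b: "sqrt (1 + s\<^sup>2) = b" by simp
  have "0 \<le> 1 - a"
    using \<open>0 \<le> y\<close> D by (simp add: a g_def D_def field_simps)
  moreover have "2 - s\<^sup>2 - 2 * a = (1 - a)\<^sup>2"
    by (simp add: power2_diff a one_minus)
  ultimately have sqrt_a: "sqrt (2 - s\<^sup>2 - 2 * a) = 1 - a" by simp
  have "(D - g) * (1 + 2 * y - y\<^sup>2 - D) = y * (4 * y * (1 - y\<^sup>2))"
    by (simp add: D_def g_def algebra_simps power2_eq_square)
  then have "y * s\<^sup>2 = (1 - a) * (b - 1)"
    unfolding s2 a b_def using D by (simp add: field_simps power2_eq_square)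
  then have "y = (1 - a) * (b - 1) / s\<^sup>2"
    using \<open>s \<noteq> 0\<close> by (simp add: eq_divide_eq)
  also have "\<dots> = (- 1 + a) / s\<^sup>2 + b / s\<^sup>2 * (1 - a)"
    using \<open>s \<noteq> 0\<close> by (simp add: field_simps)
  finally have "y = (- 1 + a) / s\<^sup>2 + b / s\<^sup>2 * (1 - a)" .
  moreover have "2 * \<sigma> * sqrt (1 - s\<^sup>2) = 2 * a" by (simp add: a_def)
  ultimately show ?thesis by (simp only: a_def[symmetric] sqrt_b sqrt_a)
qed

text \<open>Doubling at \<open>\<varpi>/4\<close>, where \<open>sl (\<varpi>/2) = 1\<close>, gives \<open>sl\<^sup>2 (\<varpi>/4) = sqrt 2 - 1\<close>, the point at
  which \<open>1 - 2 y - y\<^sup>2\<close> changes sign.\<close>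
lemma sl_quarter_varpi: "((sl (varpi / 4))\<^sup>2)\<^sup>2 + 2 * (sl (varpi / 4))\<^sup>2 = 1"
proof -
  define q where "q = (sl (varpi / 4))\<^sup>2"
  have "(1 + q\<^sup>2)\<^sup>2 = 4 * q * (1 - q\<^sup>2)"
    using sl_double_sq[of "varpi / 4"] by (simp add: q_def sl_half_varpi)
  then have "(1 - 2 * q - q\<^sup>2)\<^sup>2 = 0" by algebra
  then show ?thesis by (simp add: q_def)
qed

lemma sl_sq_quartic_nonneg:
  assumes "\<bar>v\<bar> \<le> varpi / 4"
  shows "0 \<le> 1 - 2 * (sl v)\<^sup>2 - ((sl v)\<^sup>2)\<^sup>2"
proof -
  have "(sl v)\<^sup>2 = (sl \<bar>v\<bar>)\<^sup>2" by (simp add: abs_if sl_minus)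
  also have "\<dots> \<le> (sl (varpi / 4))\<^sup>2"
    using assms varpi_pos by (intro power_mono sl_mono sl_nonneg) auto
  finally have le: "(sl v)\<^sup>2 \<le> (sl (varpi / 4))\<^sup>2" .
  then have "((sl v)\<^sup>2)\<^sup>2 \<le> ((sl (varpi / 4))\<^sup>2)\<^sup>2" by (rule power_mono) auto
  then show ?thesis using le sl_quarter_varpi by linarith
qed

lemma sl_sq_quartic_nonpos:
  assumes "varpi / 4 \<le> v" "v \<le> 3 * varpi / 4"
  shows "1 - 2 * (sl v)\<^sup>2 - ((sl v)\<^sup>2)\<^sup>2 \<le> 0"
proof -
  define w where "w = min v (varpi - v)"
  have "(sl (varpi / 4))\<^sup>2 \<le> (sl w)\<^sup>2"
    using assms varpi_pos by (intro power_mono sl_mono sl_nonneg) (auto simp: w_def min_def)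
  also have "\<dots> = (sl v)\<^sup>2" by (simp add: w_def min_def sl_varpi_minus)
  finally have le: "(sl (varpi / 4))\<^sup>2 \<le> (sl v)\<^sup>2" .
  then have "((sl (varpi / 4))\<^sup>2)\<^sup>2 \<le> ((sl v)\<^sup>2)\<^sup>2" by (rule power_mono) auto
  then show ?thesis using le sl_quarter_varpi by linarith
qed

theorem mainTheorem12:
  fixes m :: int and l s :: real
  assumes hs: "s = sleaf 2 l"
    and hs0: "s \<noteq> 0"
  shows "(pi_leaf 2 / 2 * (4 * real_of_int m + 1) \<le> l \<and> l \<le> pi_leaf 2 / 2 * (4 * real_of_int m + 3) \<longrightarrow>
           (sleaf 2 (l / 2))\<^sup>2 = (- 1 - sqrt (1 - s\<^sup>2)) / s\<^sup>2
              + sqrt (1 + s\<^sup>2) / s\<^sup>2 * sqrt (2 - s\<^sup>2 + 2 * sqrt (1 - s\<^sup>2)))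
       \<and> (pi_leaf 2 / 2 * (4 * real_of_int m - 1) \<le> l \<and> l \<le> pi_leaf 2 / 2 * (4 * real_of_int m + 1) \<longrightarrow>
           (sleaf 2 (l / 2))\<^sup>2 = (- 1 + sqrt (1 - s\<^sup>2)) / s\<^sup>2
              + sqrt (1 + s\<^sup>2) / s\<^sup>2 * sqrt (2 - s\<^sup>2 - 2 * sqrt (1 - s\<^sup>2)))"
proof -
  define y where "y = (sl (l / 2))\<^sup>2"
  define v where "v = l / 2 - of_int m * varpi"
  have y_v: "y = (sl v)\<^sup>2"
    using sl_sq_add_int_varpi[of v m] by (simp add: y_def v_def)
  have root: "y = (- 1 + \<sigma> * sqrt (1 - s\<^sup>2)) / s\<^sup>2
      + sqrt (1 + s\<^sup>2) / s\<^sup>2 * sqrt (2 - s\<^sup>2 - 2 * \<sigma> * sqrt (1 - s\<^sup>2))"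
    if "\<sigma> = 1 \<or> \<sigma> = - 1" "0 \<le> \<sigma> * (1 - 2 * y - y\<^sup>2)" for \<sigma>
    using quartic_root[OF hs0 _ _ _ that] sl_double_sq[of "l / 2"] abs_sl_le_1[of "l / 2"]
    by (simp add: y_def hs sleaf_2_eq_sl abs_square_le_1)
  show ?thesis
  proof (intro conjI impI)
    assume "pi_leaf 2 / 2 * (4 * real_of_int m + 1) \<le> l \<and> l \<le> pi_leaf 2 / 2 * (4 * real_of_int m + 3)"
    then have "varpi / 4 \<le> v" "v \<le> 3 * varpi / 4"
      by (auto simp: pi_leaf_2_eq_varpi v_def algebra_simps)
    then have "0 \<le> - 1 * (1 - 2 * y - y\<^sup>2)"
      unfolding y_v using sl_sq_quartic_nonpos by simp
    from root[OF _ this] show "(sleaf 2 (l / 2))\<^sup>2 = (- 1 - sqrt (1 - s\<^sup>2)) / s\<^sup>2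
        + sqrt (1 + s\<^sup>2) / s\<^sup>2 * sqrt (2 - s\<^sup>2 + 2 * sqrt (1 - s\<^sup>2))"
      by (simp add: sleaf_2_eq_sl y_def)
  next
    assume "pi_leaf 2 / 2 * (4 * real_of_int m - 1) \<le> l \<and> l \<le> pi_leaf 2 / 2 * (4 * real_of_int m + 1)"
    then have "\<bar>v\<bar> \<le> varpi / 4"
      unfolding abs_le_iff by (auto simp: pi_leaf_2_eq_varpi v_def algebra_simps)
    then have "0 \<le> 1 * (1 - 2 * y - y\<^sup>2)"
      unfolding y_v using sl_sq_quartic_nonneg by simp
    from root[OF _ this] show "(sleaf 2 (l / 2))\<^sup>2 = (- 1 + sqrt (1 - s\<^sup>2)) / s\<^sup>2
        + sqrt (1 + s\<^sup>2) / s\<^sup>2 * sqrt (2 - s\<^sup>2 - 2 * sqrt (1 - s\<^sup>2))"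
      by (simp add: sleaf_2_eq_sl y_def)
  qed
qed

end
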